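(* Let $G$ be a blockgraph that is valid and proper. Then in the total balance of $G$, every account has non-negative balance.
   Context: Accounts and transactions. There is a set $\mathbb{B}$ of bank public keys and a set $\mathbb{C}$ of user public keys; an account number is a pair $(b,c)\in\mathbb{B}\times\mathbb{C}$ (held by user $c$ at bank $b$). A transaction is a tuple $(s,t,m,i,d)$: $s$ is the source account and $t$ the destination account, $m>0$ is the amount, $i\in\mathbb{N}$ is a sequence number, and $d$ is a signature on $(s,t,m,i)$ made with $s$'s private key. The transaction belongs to the user of $s$. Two transactions are conflicting if they have the same source account and the same sequence number but are different. Blockgraph. A blockgraph is a finite directed acyclic graph with the following nodes. - There is exactly one init node, listing sorted account numbers with positive initial amounts (the initial balance; unlisted accounts start at $0$). - Every other node is owned by a bank and carries: the bank id, a sequence number, the hash of its parent (the previous node in the bank's chain, or the init node for sequence number $1$), and the bank's signature. - Each such node is of one of four types: start node (a list of transactions), update node (references to nodes of other banks), close node, or accept node. Edges go from each non-init node to its parent, and from each update node to the nodes it references. Along each bank's chain, the start, close and accept nodes occur in the repeating pattern start, close, accept, start, close, accept, $\dots$; update nodes may occur anywhere. The nodes from a start node to the next accept node of that bank form a block, whose close node and accept node match the start node. Terminology on a blockgraph: - $v_1$ acknowledges $v_2$ if $v_2$ is reachable from $v_1$. - The subgraph of $v$ is the set of nodes reachable from $v$, minus $v$ itself. - A bank is malicious according to a blockgraph if the blockgraph contains two different nodes of that bank with the same sequence number. - A start node is open if it has no matching accept node in the graph. Total balance. Start from the initial balance. Then, for every accept node, apply each transaction of its matching start node, provided that the subgraph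 of the matching close node contains no conflicting transaction and that the same transaction was not already applied. The applied transactions are called accepted. Uncertain transactions in $G$. These are the transactions $t$ that satisfy all of the following: - $t$ lies in an open start node of a bank $A$; - $t$ transfers from an account at bank $B$ to an account at bank $C$, with $A\neq B$ and $B\neq C$; - no other transaction of the same user with the same sequence number is applied in the total balance of $G$. Voting power distribution of $G$. Each bank initially gets the sum of the balances of its accounts in the total balance of $G$. Then, for each user having uncertain transactions in $G$, take the largest amount among that user's uncertain transactions. This amount is subtracted from the voting power of the user's bank and is assigned as shared voting power to the coalition consisting of the user's bank together with the banks of all destination accounts of that user's uncertain transactions. Validity. A node is valid if it has a (unique) representing blockgraph, its subgraph is valid (all nodes valid), and the type-specific condition below holds. A blockgraph is valid if all its nodes are valid. - Init node: always valid. - Update node: it references no node already in its parent's subgraph, and its own bank is not malicious according to its subgraph. - Start node $v$ (with subgraph $G'$): for each transaction $t$ in $v$, with user $u$ and amount $m$, let $N$ be the number of distinct accepted transactions of $u$ in $G'$. Then those $N$ transactions must have sequence numbers exactly $1,\dots,N$; $t$ must have sequence number $N+1$; no transaction of $u$ different from $t$ with sequence number $N+1$ may appear in $G'$; and $u$'s balance in the total balance of $G'$ must be at least $m$. - Close node $v_c$ following start node $v_s$: let $S$ be the set of banks $B'$ owning a node $w$ such that $v_c$ acknowledges $w$ and $w$ acknowledges $v_s$. The voting power of the banks in $S$, including voting power shared only among members of $S$, computed in the voting power distribution of $v_c$'s subgraph, must be at least a fixed threshold of at least two thirds of the total voting power. - Accept node $v_a$ following close node $v_c$: the same condition, with $S$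 the set of banks owning a node $w$ such that $v_a$ acknowledges $w$ and $w$ acknowledges $v_c$, and voting power computed in $v_a$'s subgraph. Proper. A blockgraph is proper if (1) for every pair of close nodes, at least one of them acknowledges the start node of the other's block, and (2) for every pair of accept nodes, at least one of them acknowledges the close node of the other's block. *)

theory Defs
  imports Complex_Main "HOL-Library.Product_Lexorder"
begin

text \<open>Banks have type 'b, users type 'c, signatures (of users and of banks) are
  abstract values of type 's.  An account is a pair (bank, user).\<close>

type_synonym ('b,'c) acct = "'b \<times> 'c"

datatype ('b,'c,'s) tx =
  Tx (src: "('b,'c) acct") (dst: "('b,'c) acct") (amt: real) (seqno: nat) (tsig: 's)

text \<open>Nodes.  Hashes are modelled by the referenced nodes themselves (collision-free
  hashing), so a node structurally contains its parent and references.\<close>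

datatype ('b,'c,'s) node =
    Init (init_list: "(('b,'c) acct \<times> real) list")
  | Nd (owner: 'b) (nseq: nat) (parent: "('b,'c,'s) node") (kind: "('b,'c,'s) kind") (nsig: 's)
and ('b,'c,'s) kind =
    Start "('b,'c,'s) tx list"
  | Update "('b,'c,'s) node list"
  | Close
  | Accept

definition is_init :: "('b,'c,'s) node \<Rightarrow> bool" where
  "is_init v = (case v of Init _ \<Rightarrow> True | _ \<Rightarrow> False)"

definition is_start :: "('b,'c,'s) node \<Rightarrow> bool" where
  "is_start v = (case v of Nd _ _ _ (Start _) _ \<Rightarrow> True | _ \<Rightarrow> False)"

definition is_update :: "('b,'c,'s) node \<Rightarrow> bool" where
  "is_update v = (case v of Nd _ _ _ (Update _) _ \<Rightarrow> True | _ \<Rightarrow> False)"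

definition is_close :: "('b,'c,'s) node \<Rightarrow> bool" where
  "is_close v = (case v of Nd _ _ _ Close _ \<Rightarrow> True | _ \<Rightarrow> False)"

definition is_accept :: "('b,'c,'s) node \<Rightarrow> bool" where
  "is_accept v = (case v of Nd _ _ _ Accept _ \<Rightarrow> True | _ \<Rightarrow> False)"

definition node_txs :: "('b,'c,'s) node \<Rightarrow> ('b,'c,'s) tx set" where
  "node_txs v = (case v of Nd _ _ _ (Start ts) _ \<Rightarrow> set ts | _ \<Rightarrow> {})"

definition txs_in :: "('b,'c,'s) node set \<Rightarrow> ('b,'c,'s) tx set" where
  "txs_in S = (\<Union>v\<in>S. node_txs v)"

definition node_refs :: "('b,'c,'s) node \<Rightarrow> ('b,'c,'s) node set" where
  "node_refs v = (case v of Nd _ _ _ (Update rs) _ \<Rightarrow> set rs | _ \<Rightarrow> {})"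

definition conflicting :: "('b,'c,'s) tx \<Rightarrow> ('b,'c,'s) tx \<Rightarrow> bool" where
  "conflicting t t' \<longleftrightarrow> src t = src t' \<and> seqno t = seqno t' \<and> t \<noteq> t'"

definition children :: "('b,'c,'s) node \<Rightarrow> ('b,'c,'s) node set" where
  "children v = (case v of Init _ \<Rightarrow> {} | Nd _ _ p _ _ \<Rightarrow> insert p (node_refs v))"

definition edges :: "(('b,'c,'s) node \<times> ('b,'c,'s) node) set" where
  "edges = {(v, w). w \<in> children v}"

definition acks :: "('b,'c,'s) node \<Rightarrow> ('b,'c,'s) node \<Rightarrow> bool" where
  "acks v w \<longleftrightarrow> (v, w) \<in> edges\<^sup>*"

definition subgraph :: "('b,'c,'s) node \<Rightarrow> ('b,'c,'s) node set" where
  "subgraph v = {w. (v, w) \<in> edges\<^sup>*} - {v}"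

definition rep :: "('b,'c,'s) node \<Rightarrow> ('b,'c,'s) node set" where
  "rep v = {w. (v, w) \<in> edges\<^sup>*}"

fun last_main :: "('b,'c,'s) node \<Rightarrow> ('b,'c,'s) node option" where
  "last_main (Init l) = None"
| "last_main (Nd b n p k s) =
     (case k of Update _ \<Rightarrow> last_main p | _ \<Rightarrow> Some (Nd b n p k s))"

definition start_of_close :: "('b,'c,'s) node \<Rightarrow> ('b,'c,'s) node" where
  "start_of_close c = the (last_main (parent c))"

definition close_of :: "('b,'c,'s) node \<Rightarrow> ('b,'c,'s) node" where
  "close_of a = the (last_main (parent a))"

definition start_of :: "('b,'c,'s) node \<Rightarrow> ('b,'c,'s) node" where
  "start_of a = start_of_close (close_of a)"

definition node_wf :: "('b::linorder,'c::linorder,'s) node \<Rightarrow> bool" where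
  "node_wf v = (case v of
      Init l \<Rightarrow> sorted_wrt (<) (map fst l) \<and> (\<forall>x\<in>set l. snd x > 0)
    | Nd b n p k s \<Rightarrow>
        ((n = 1 \<and> is_init p) \<or> (n \<ge> 2 \<and> \<not> is_init p \<and> owner p = b \<and> nseq p = n - 1))
      \<and> (case k of
            Update rs \<Rightarrow> (\<forall>r\<in>set rs. \<not> is_init r \<and> owner r \<noteq> b)
          | Start ts \<Rightarrow> (last_main p = None \<or> (\<exists>w. last_main p = Some w \<and> is_accept w))
                        \<and> (\<forall>t\<in>set ts. amt t > 0)
          | Close \<Rightarrow> (\<exists>w. last_main p = Some w \<and> is_start w)
          | Accept \<Rightarrow> (\<exists>w. last_main p = Some w \<and> is_close w)))"

definition is_blockgraph :: "('b::linorder,'c::linorder,'s) node set \<Rightarrow> bool" where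
  "is_blockgraph G \<longleftrightarrow> finite G
     \<and> (\<forall>v\<in>G. children v \<subseteq> G)
     \<and> (\<exists>!v. v \<in> G \<and> is_init v)
     \<and> (\<forall>v\<in>G. node_wf v)"

definition malicious :: "('b,'c,'s) node set \<Rightarrow> 'b \<Rightarrow> bool" where
  "malicious G b \<longleftrightarrow> (\<exists>v\<in>G. \<exists>w\<in>G. v \<noteq> w \<and> \<not> is_init v \<and> \<not> is_init w
       \<and> owner v = b \<and> owner w = b \<and> nseq v = nseq w)"

definition open_start :: "('b,'c,'s) node set \<Rightarrow> ('b,'c,'s) node \<Rightarrow> bool" where
  "open_start G v \<longleftrightarrow> is_start v \<and> \<not> (\<exists>a\<in>G. is_accept a \<and> start_of a = v)"

definition init_node :: "('b,'c,'s) node set \<Rightarrow> ('b,'c,'s) node" where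
  "init_node G = (THE v. v \<in> G \<and> is_init v)"

definition init_bal :: "('b,'c,'s) node set \<Rightarrow> ('b,'c) acct \<Rightarrow> real" where
  "init_bal G a = (case map_of (init_list (init_node G)) a of Some m \<Rightarrow> m | None \<Rightarrow> 0)"

text \<open>Each transaction is applied at most once (set semantics).\<close>
definition accepted :: "('b,'c,'s) node set \<Rightarrow> ('b,'c,'s) tx set" where
  "accepted G = {t. \<exists>a\<in>G. is_accept a \<and> t \<in> node_txs (start_of a)
                       \<and> \<not> (\<exists>t'\<in>txs_in (subgraph (close_of a)). conflicting t t')}"

definition balance :: "('b,'c,'s) node set \<Rightarrow> ('b,'c) acct \<Rightarrow> real" where
  "balance G a = init_bal G a
      + (\<Sum>t\<in>{t\<in>accepted G. dst t = a}. amt t)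
      - (\<Sum>t\<in>{t\<in>accepted G. src t = a}. amt t)"

text \<open>Users are identified with their (source) account; the user's bank is the bank
  of that account.\<close>
definition uncertain :: "('b,'c,'s) node set \<Rightarrow> ('b,'c,'s) tx set" where
  "uncertain G = {t. \<exists>v\<in>G. open_start G v \<and> t \<in> node_txs v
        \<and> owner v \<noteq> fst (src t) \<and> fst (src t) \<noteq> fst (dst t)
        \<and> \<not> (\<exists>t'\<in>accepted G. t' \<noteq> t \<and> src t' = src t \<and> seqno t' = seqno t)}"

definition unc_users :: "('b,'c,'s) node set \<Rightarrow> ('b,'c) acct set" where
  "unc_users G = src ` uncertain G"

definition unc_max :: "('b,'c,'s) node set \<Rightarrow> ('b,'c) acct \<Rightarrow> real" where
  "unc_max G u = Max (amt ` {t\<in>uncertain G. src t = u})"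

definition coalition :: "('b,'c,'s) node set \<Rightarrow> ('b,'c) acct \<Rightarrow> 'b set" where
  "coalition G u = insert (fst u) ((\<lambda>t. fst (dst t)) ` {t\<in>uncertain G. src t = u})"

text \<open>Accounts possibly having nonzero balance.\<close>
definition accts :: "('b,'c,'s) node set \<Rightarrow> ('b,'c) acct set" where
  "accts G = fst ` set (init_list (init_node G)) \<union> src ` accepted G \<union> dst ` accepted G"

definition bank_power :: "('b,'c,'s) node set \<Rightarrow> 'b \<Rightarrow> real" where
  "bank_power G b = (\<Sum>a\<in>{a\<in>accts G. fst a = b}. balance G a)"

definition ind_power :: "('b,'c,'s) node set \<Rightarrow> 'b \<Rightarrow> real" where
  "ind_power G b = bank_power G b - (\<Sum>u\<in>{u\<in>unc_users G. fst u = b}. unc_max G u)"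

definition power_of :: "('b,'c,'s) node set \<Rightarrow> 'b set \<Rightarrow> real" where
  "power_of G S = (\<Sum>b\<in>S. ind_power G b)
      + (\<Sum>u\<in>{u\<in>unc_users G. coalition G u \<subseteq> S}. unc_max G u)"

definition total_power :: "('b,'c,'s) node set \<Rightarrow> real" where
  "total_power G = (\<Sum>a\<in>accts G. balance G a)"

definition banks_between :: "('b,'c,'s) node \<Rightarrow> ('b,'c,'s) node \<Rightarrow> 'b set" where
  "banks_between x y = {owner w | w. acks x w \<and> acks w y \<and> \<not> is_init w}"

definition local_ok :: "real \<Rightarrow> ('b::linorder,'c::linorder,'s) node \<Rightarrow> bool" where
  "local_ok \<theta> v = (case v of
      Init _ \<Rightarrow> True
    | Nd b n p k s \<Rightarrow> (case k of
        Update rs \<Rightarrow> set rs \<inter> subgraph p = {} \<and> \<not> malicious (subgraph v) b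
      | Start ts \<Rightarrow> (\<forall>t\<in>set ts.
           let G' = subgraph v; u = src t;
               A = {t'\<in>accepted G'. src t' = u}; N = card A
           in seqno ` A = {1..N} \<and> seqno t = N + 1
              \<and> (\<forall>t'\<in>txs_in G'. src t' = u \<and> seqno t' = N + 1 \<longrightarrow> t' = t)
              \<and> balance G' u \<ge> amt t)
      | Close \<Rightarrow> power_of (subgraph v) (banks_between v (start_of_close v))
                   \<ge> \<theta> * total_power (subgraph v)
      | Accept \<Rightarrow> power_of (subgraph v) (banks_between v (close_of v))
                   \<ge> \<theta> * total_power (subgraph v)))"

text \<open>A node is valid iff its representing blockgraph is a blockgraph and every node
  of it (itself and its subgraph) satisfies its type-specific condition (this is the
  unfolding of the recursive definition).\<close>
definition valid_node :: "real \<Rightarrow> ('b::linorder,'c::linorder,'s) node \<Rightarrow> bool" where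
  "valid_node \<theta> v \<longleftrightarrow> (\<forall>w\<in>rep v. is_blockgraph (rep w) \<and> local_ok \<theta> w)"

definition valid :: "real \<Rightarrow> ('b::linorder,'c::linorder,'s) node set \<Rightarrow> bool" where
  "valid \<theta> G \<longleftrightarrow> is_blockgraph G \<and> (\<forall>v\<in>G. valid_node \<theta> v)"

definition proper :: "('b,'c,'s) node set \<Rightarrow> bool" where
  "proper G \<longleftrightarrow>
     (\<forall>c1\<in>G. \<forall>c2\<in>G. is_close c1 \<and> is_close c2 \<longrightarrow>
         acks c1 (start_of_close c2) \<or> acks c2 (start_of_close c1))
   \<and> (\<forall>a1\<in>G. \<forall>a2\<in>G. is_accept a1 \<and> is_accept a2 \<longrightarrow>
         acks a1 (close_of a2) \<or> acks a2 (close_of a1))"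

end

theory Submission
  imports Defs
begin

text \<open>Fix an account u that has spent something, and let tm be its accepted outgoing
  transaction with the largest sequence number, listed in the start node s.  Validity of s
  says that the accepted outgoing transactions of u below s carry the sequence numbers
  1, ..., N, that tm carries N + 1, and that u could afford tm in the subgraph of s.
  Properness forbids two accepted transactions of u with the same sequence number, so the
  outgoing transactions of u in G are exactly those below s together with tm.  Incoming
  transactions and the initial balance only grow from the subgraph to G, hence the balance
  of u in G is at least its balance below s minus the amount of tm, which is nonnegative.\<close>

definition outgoing :: "('b,'c,'s) node set \<Rightarrow> ('b,'c) acct \<Rightarrow> ('b,'c,'s) tx set" where
  "outgoing G u = {t \<in> accepted G. src t = u}"

definition incoming :: "('b,'c,'s) node set \<Rightarrow> ('b,'c) acct \<Rightarrow> ('b,'c,'s) tx set" where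
  "incoming G u = {t \<in> accepted G. dst t = u}"

lemma balance_eq: "balance G u = init_bal G u + sum amt (incoming G u) - sum amt (outgoing G u)"
  unfolding balance_def incoming_def outgoing_def ..

lemma reachable_in_closed:
  assumes "\<forall>v\<in>G. children v \<subseteq> G" "(v, w) \<in> edges\<^sup>*" "v \<in> G"
  shows "w \<in> G"
  using assms(2,3) by induction (use assms(1) in \<open>auto simp: edges_def\<close>)

lemma subgraph_subset:
  assumes "is_blockgraph G" "v \<in> G"
  shows "subgraph v \<subseteq> G"
  using reachable_in_closed[of G v] assms unfolding is_blockgraph_def subgraph_def by blast

lemma last_main_reachable: "last_main p = Some w \<Longrightarrow> (p, w) \<in> edges\<^sup>*"
proof (induction p rule: last_main.induct)
  case (2 b n p k s)
  show ?case
  proof (cases k)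
    case (Update rs)
    then have "(p, w) \<in> edges\<^sup>*" using 2 by simp
    moreover have "(Nd b n p k s, p) \<in> edges" by (simp add: edges_def children_def)
    ultimately show ?thesis by (meson converse_rtrancl_into_rtrancl)
  qed (use 2(2) in auto)
qed simp

lemma last_main_parent_in:
  assumes "is_blockgraph G" "v \<in> G" "\<not> is_init v" "last_main (parent v) = Some w"
  shows "w \<in> G"
proof -
  have "(v, parent v) \<in> edges"
    using assms(3) by (cases v) (auto simp: edges_def children_def is_init_def)
  then have vw: "(v, w) \<in> edges\<^sup>*"
    using last_main_reachable[OF assms(4)] by (meson converse_rtrancl_into_rtrancl)
  then show "w \<in> G"
    using reachable_in_closed[OF _ vw assms(2)] assms(1) unfolding is_blockgraph_def by blast
qed

lemma close_of_in:
  assumes "is_blockgraph G" "a \<in> G" "is_accept a"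
  shows "close_of a \<in> G" "is_close (close_of a)"
proof -
  obtain b n p s where a: "a = Nd b n p Accept s"
    using assms(3) unfolding is_accept_def by (auto split: node.splits kind.splits)
  have "node_wf a" using assms(1,2) unfolding is_blockgraph_def by blast
  then obtain w where w: "last_main p = Some w" "is_close w"
    unfolding node_wf_def a by auto
  then show "close_of a \<in> G" "is_close (close_of a)"
    using last_main_parent_in[OF assms(1,2)] a by (auto simp: close_of_def is_init_def)
qed

lemma start_of_close_in:
  assumes "is_blockgraph G" "c \<in> G" "is_close c"
  shows "start_of_close c \<in> G" "is_start (start_of_close c)"
proof -
  obtain b n p s where c: "c = Nd b n p Close s"
    using assms(3) unfolding is_close_def by (auto split: node.splits kind.splits)
  have "node_wf c" using assms(1,2) unfolding is_blockgraph_def by blast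
  then obtain w where w: "last_main p = Some w" "is_start w"
    unfolding node_wf_def c by auto
  then show "start_of_close c \<in> G" "is_start (start_of_close c)"
    using last_main_parent_in[OF assms(1,2)] c by (auto simp: start_of_close_def is_init_def)
qed

lemma start_of_in:
  assumes "is_blockgraph G" "a \<in> G" "is_accept a"
  shows "start_of a \<in> G" "is_start (start_of a)"
  using start_of_close_in[OF assms(1) close_of_in[OF assms]] by (simp_all add: start_of_def)

lemma accepted_mono: "H \<subseteq> G \<Longrightarrow> accepted H \<subseteq> accepted G"
  unfolding accepted_def by blast

lemma finite_accepted:
  fixes G :: "('b,'c,'s) node set"
  assumes "finite G" shows "finite (accepted G)"
proof -
  have "finite (node_txs v)" for v :: "('b,'c,'s) node"
    unfolding node_txs_def by (auto split: node.splits kind.splits)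
  moreover have "accepted G \<subseteq> (\<Union>a\<in>G. node_txs (start_of a))"
    unfolding accepted_def by blast
  ultimately show ?thesis using assms by (meson finite_UN_I finite_subset)
qed

lemma finite_outgoing: "is_blockgraph G \<Longrightarrow> finite (outgoing G u)"
  using finite_accepted[of G] unfolding is_blockgraph_def outgoing_def by simp

lemma finite_incoming: "is_blockgraph G \<Longrightarrow> finite (incoming G u)"
  using finite_accepted[of G] unfolding is_blockgraph_def incoming_def by simp

lemma accepted_in_start:
  assumes "is_blockgraph G" "t \<in> accepted G"
  obtains s where "s \<in> G" "is_start s" "t \<in> node_txs s"
  using assms start_of_in[OF assms(1)] unfolding accepted_def by blast

lemma start_amt_pos:
  assumes "is_blockgraph G" "s \<in> G" "is_start s" "t \<in> node_txs s"
  shows "amt t > 0"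
proof -
  obtain b n p ts sg where s: "s = Nd b n p (Start ts) sg"
    using assms(3) unfolding is_start_def by (auto split: node.splits kind.splits)
  have "node_wf s" using assms(1,2) unfolding is_blockgraph_def by blast
  then show ?thesis using assms(4) unfolding node_wf_def s node_txs_def by auto
qed

lemma accepted_amt_pos:
  assumes "is_blockgraph G" "t \<in> accepted G"
  shows "amt t > 0"
proof -
  obtain s where "s \<in> G" "is_start s" "t \<in> node_txs s" using accepted_in_start[OF assms] .
  then show ?thesis by (rule start_amt_pos[OF assms(1)])
qed

lemma init_node_eqI:
  assumes "i \<in> H" "is_init i" "\<And>w. w \<in> H \<Longrightarrow> is_init w \<Longrightarrow> w = i"
  shows "init_node H = i"
  unfolding init_node_def by (rule the_equality) (use assms in blast)+

lemma the_init_node: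
  assumes "is_blockgraph G" "i \<in> G" "is_init i"
  shows "init_node G = i"
proof (rule init_node_eqI[OF assms(2,3)])
  show "w = i" if "w \<in> G" "is_init w" for w
    using assms that unfolding is_blockgraph_def by blast
qed

lemma init_bal_nonneg:
  assumes "is_blockgraph G"
  shows "init_bal G a \<ge> 0"
proof -
  obtain i where i: "i \<in> G" "is_init i" using assms unfolding is_blockgraph_def by blast
  then obtain l where l: "i = Init l" unfolding is_init_def by (auto split: node.splits)
  have "node_wf i" using assms i unfolding is_blockgraph_def by blast
  then have "m > 0" if "map_of l a = Some m" for m
    using map_of_SomeD[OF that] unfolding node_wf_def l by auto
  then show ?thesis
    unfolding init_bal_def the_init_node[OF assms i] l by (auto split: option.split)
qed

lemma init_bal_subgraph:
  assumes "is_blockgraph G" "v \<in> G" "is_blockgraph (rep v)" "\<not> is_init v"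
  shows "init_bal (subgraph v) = init_bal G"
proof -
  obtain i where i: "i \<in> rep v" "is_init i" using assms(3) unfolding is_blockgraph_def by blast
  have "i \<noteq> v" using i(2) assms(4) by blast
  then have "i \<in> subgraph v" using i(1) unfolding rep_def subgraph_def by blast
  then have "i \<in> G" using subgraph_subset[OF assms(1,2)] by blast
  have "w = i" if "w \<in> subgraph v" "is_init w" for w
  proof -
    have "w \<in> rep v" using that(1) unfolding rep_def subgraph_def by blast
    then show ?thesis using assms(3) i that(2) unfolding is_blockgraph_def by blast
  qed
  then have "init_node (subgraph v) = i"
    using i(2) \<open>i \<in> subgraph v\<close> by (intro init_node_eqI)
  moreover have "init_node G = i" using the_init_node[OF assms(1) \<open>i \<in> G\<close> i(2)] .
  ultimately show ?thesis by (simp add: init_bal_def fun_eq_iff)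
qed

lemma valid_blockgraph: "valid \<theta> G \<Longrightarrow> is_blockgraph G"
  unfolding valid_def by blast

lemma valid_rep:
  assumes "valid \<theta> G" "v \<in> G"
  shows "is_blockgraph (rep v)" "local_ok \<theta> v"
proof -
  have "v \<in> rep v" unfolding rep_def by simp
  then show "is_blockgraph (rep v)" "local_ok \<theta> v"
    using assms unfolding valid_def valid_node_def by blast+
qed

lemma valid_start_tx:
  assumes "valid \<theta> G" "s \<in> G" "is_start s" "t \<in> node_txs s"
  defines "N \<equiv> card (outgoing (subgraph s) (src t))"
  shows "seqno ` outgoing (subgraph s) (src t) = {1..N}"
    and "seqno t = N + 1"
    and "amt t \<le> balance (subgraph s) (src t)"
proof -
  obtain b n p ts sg where s: "s = Nd b n p (Start ts) sg"
    using assms(3) unfolding is_start_def by (auto split: node.splits kind.splits)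
  from valid_rep(2)[OF assms(1,2)] assms(4)
  show "seqno ` outgoing (subgraph s) (src t) = {1..N}" "seqno t = N + 1"
    "amt t \<le> balance (subgraph s) (src t)"
    unfolding local_ok_def s node_txs_def Let_def N_def outgoing_def by auto
qed

lemma accepted_seqno_pos: "valid \<theta> G \<Longrightarrow> t \<in> accepted G \<Longrightarrow> seqno t \<ge> 1"
  by (metis accepted_in_start le_add2 valid_blockgraph valid_start_tx(2))

text \<open>No double spending: the close node of one block acknowledges the start node of the
  other, so the later close node would see the conflicting transaction.\<close>
lemma accepted_unique:
  assumes "is_blockgraph G" "proper G" "t1 \<in> accepted G" "t2 \<in> accepted G"
    and "src t1 = src t2" "seqno t1 = seqno t2"
  shows "t1 = t2"
proof (rule ccontr)
  assume "t1 \<noteq> t2"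
  then have conflict: "conflicting t1 t2" "conflicting t2 t1"
    using assms(5,6) unfolding conflicting_def by auto
  have seen: "t \<in> txs_in (subgraph (close_of a))"
    if "a \<in> G" "is_accept a" "a' \<in> G" "is_accept a'" "t \<in> node_txs (start_of a')"
      and "acks (close_of a) (start_of a')" for a a' t
  proof -
    have "start_of a' \<noteq> close_of a"
      using close_of_in[OF assms(1) that(1,2)] start_of_in[OF assms(1) that(3,4)]
      unfolding is_start_def is_close_def by (auto split: node.splits kind.splits)
    then show ?thesis using that(5,6) unfolding acks_def subgraph_def txs_in_def by blast
  qed
  obtain a1 a2 where a: "a1 \<in> G" "is_accept a1" "t1 \<in> node_txs (start_of a1)"
    "\<not> (\<exists>t'\<in>txs_in (subgraph (close_of a1)). conflicting t1 t')"
    "a2 \<in> G" "is_accept a2" "t2 \<in> node_txs (start_of a2)"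
    "\<not> (\<exists>t'\<in>txs_in (subgraph (close_of a2)). conflicting t2 t')"
    using assms(3,4) unfolding accepted_def by blast
  have "is_close (close_of a1)" "close_of a1 \<in> G" "is_close (close_of a2)" "close_of a2 \<in> G"
    using close_of_in[OF assms(1)] a(1,2,5,6) by blast+
  then have "acks (close_of a1) (start_of a2) \<or> acks (close_of a2) (start_of a1)"
    using assms(2) unfolding proper_def start_of_def by blast
  then show False
  proof
    assume "acks (close_of a1) (start_of a2)"
    then show False using seen[OF a(1,2,5,6,7)] a(4) conflict(1) by blast
  next
    assume "acks (close_of a2) (start_of a1)"
    then show False using seen[OF a(5,6,1,2,3)] a(8) conflict(2) by blast
  qed
qed

lemma outgoing_last:
  assumes "valid \<theta> G" "proper G"
    and tm: "tm \<in> outgoing G u" "\<forall>t\<in>outgoing G u. seqno t \<le> seqno tm"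
    and s: "s \<in> G" "is_start s" "tm \<in> node_txs s"
  shows "outgoing G u = insert tm (outgoing (subgraph s) u)"
    and "tm \<notin> outgoing (subgraph s) u"
proof -
  have bg: "is_blockgraph G" using assms(1) by (rule valid_blockgraph)
  have u: "src tm = u" using tm(1) unfolding outgoing_def by simp
  let ?A = "outgoing (subgraph s) u"
  note ok = valid_start_tx[OF assms(1) s, unfolded u]
  have A_sub: "?A \<subseteq> outgoing G u"
    using accepted_mono[OF subgraph_subset[OF bg s(1)]] unfolding outgoing_def by blast
  show tm_notin: "tm \<notin> ?A" using ok(1,2) by force
  have "t \<in> ?A" if t: "t \<in> outgoing G u" "t \<noteq> tm" for t
  proof -
    have acc: "t \<in> accepted G" "src t = u" using t(1) unfolding outgoing_def by auto
    have "seqno t \<noteq> seqno tm"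
      using accepted_unique[OF bg assms(2) acc(1)] tm(1) t(2) acc(2) u
      unfolding outgoing_def by auto
    moreover have "1 \<le> seqno t" "seqno t \<le> seqno tm"
      using accepted_seqno_pos[OF assms(1) acc(1)] tm(2) t(1) by auto
    ultimately have "seqno t \<in> seqno ` ?A" unfolding ok(1) ok(2) by simp
    then obtain t' where t': "t' \<in> ?A" "seqno t' = seqno t" by (metis imageE)
    then have "t' = t"
      using accepted_unique[OF bg assms(2) _ acc(1)] A_sub acc(2) unfolding outgoing_def by auto
    then show ?thesis using t' by simp
  qed
  then show "outgoing G u = insert tm ?A" using A_sub tm(1) by blast
qed

lemma balance_ge_before_last_outgoing:
  assumes "valid \<theta> G" "proper G"
    and tm: "tm \<in> outgoing G u" "\<forall>t\<in>outgoing G u. seqno t \<le> seqno tm"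
    and s: "s \<in> G" "is_start s" "tm \<in> node_txs s"
  shows "balance (subgraph s) u - amt tm \<le> balance G u"
proof -
  have bg: "is_blockgraph G" using assms(1) by (rule valid_blockgraph)
  have sub: "accepted (subgraph s) \<subseteq> accepted G"
    using accepted_mono[OF subgraph_subset[OF bg s(1)]] .
  have "finite (outgoing (subgraph s) u)"
    using finite_outgoing[OF bg, of u] outgoing_last(1)[OF assms] by (metis finite_insert)
  then have "sum amt (outgoing G u) = amt tm + sum amt (outgoing (subgraph s) u)"
    using outgoing_last[OF assms] by simp
  moreover have "sum amt (incoming (subgraph s) u) \<le> sum amt (incoming G u)"
    using finite_incoming[OF bg] sub accepted_amt_pos[OF bg]
    by (intro sum_mono2) (auto simp: incoming_def less_imp_le)
  moreover have "\<not> is_init s" using s(2) by (auto simp: is_init_def is_start_def split: node.splits)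
  then have "init_bal (subgraph s) u = init_bal G u"
    using init_bal_subgraph[OF bg s(1) valid_rep(1)[OF assms(1) s(1)]] by simp
  ultimately show ?thesis using balance_eq[of G u] balance_eq[of "subgraph s" u] by linarith
qed

theorem mainTheorem2:
  fixes \<theta> :: real and G :: "('b::linorder, 'c::linorder, 's) node set"
  assumes "\<theta> \<ge> 2/3"
    and "valid \<theta> G"
    and "proper G"
  shows "\<forall>a. balance G a \<ge> 0"
proof
  fix u
  have bg: "is_blockgraph G" using assms(2) by (rule valid_blockgraph)
  show "balance G u \<ge> 0"
  proof (cases "outgoing G u = {}")
    case True
    have "sum amt (incoming G u) \<ge> 0"
      using accepted_amt_pos[OF bg] by (intro sum_nonneg) (simp add: incoming_def less_imp_le)
    then show ?thesis using balance_eq[of G u] True init_bal_nonneg[OF bg, of u] by simp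
  next
    case False
    note fin = finite_outgoing[OF bg, of u]
    have "Max (seqno ` outgoing G u) \<in> seqno ` outgoing G u" using fin False by simp
    then obtain tm where "tm \<in> outgoing G u" "seqno tm = Max (seqno ` outgoing G u)" by auto
    then have tm: "tm \<in> outgoing G u" "\<forall>t\<in>outgoing G u. seqno t \<le> seqno tm"
      using fin by simp_all
    obtain s where s: "s \<in> G" "is_start s" "tm \<in> node_txs s"
      using tm(1) accepted_in_start[OF bg] unfolding outgoing_def by blast
    have "amt tm \<le> balance (subgraph s) u"
      using valid_start_tx(3)[OF assms(2) s] tm(1) unfolding outgoing_def by simp
    then show ?thesis using balance_ge_before_last_outgoing[OF assms(2,3) tm s] by linarith
  qed
qed

end
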